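(* Let $n\ge2$ and $1\le j\le n$, $r>0$. Then $$\sup_{S\in W_r^1}|\theta_{j,n}-\theta_j|\le2\pi\sqrt r\,j/n,$$ where $\theta_{j,n}=\frac1n\sum_{l=1}^nS(l/n)\phi_j(l/n)$ and $\theta_j=\int_0^1S(t)\phi_j(t)dt$.
   Context: $\phi_1\equiv1$, $\phi_j(x)=\sqrt2\,\mathrm{Tr}_j(2\pi[j/2]x)$ for $j\ge2$, where $\mathrm{Tr}_j=\cos$ for even $j$, $\sin$ for odd $j$, $[\cdot]$ integer part. $W_r^1$: set of 1-periodic continuously differentiable $f:\mathbb R\to\mathbb R$ with $\|f\|^2+\|f'\|^2\le r$, $\|f\|^2=\int_0^1f^2$. *)

theory Defs
  imports "HOL-Analysis.Analysis"
begin

definition phi :: "nat \<Rightarrow> real \<Rightarrow> real" where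
  "phi j x = (if j = 1 then 1
              else sqrt 2 * (if even j then cos (2 * pi * real (j div 2) * x)
                                       else sin (2 * pi * real (j div 2) * x)))"

definition W1 :: "real \<Rightarrow> (real \<Rightarrow> real) set" where
  "W1 r = {f. (\<forall>x. f (x + 1) = f x)
             \<and> (\<forall>x. f differentiable at x)
             \<and> continuous_on UNIV (deriv f)
             \<and> integral {0..1} (\<lambda>t. (f t)\<^sup>2) + integral {0..1} (\<lambda>t. (deriv f t)\<^sup>2) \<le> r}"

definition theta_n :: "(real \<Rightarrow> real) \<Rightarrow> nat \<Rightarrow> nat \<Rightarrow> real" where
  "theta_n S j n = (1 / real n) * (\<Sum>l = 1..n. S (real l / real n) * phi j (real l / real n))"

definition theta :: "(real \<Rightarrow> real) \<Rightarrow> nat \<Rightarrow> real" where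
  "theta S j = integral {0..1} (\<lambda>t. S t * phi j t)"

end

theory Submission imports Defs begin

text \<open>On each cell of the uniform partition, the right-endpoint value of \<open>g = S \<phi>\<^sub>j\<close> differs
  from its mean by at most the total variation \<open>\<integral>|g'|\<close> over the cell, so the Riemann-sum
  error is at most \<open>\<integral>\<^sub>0\<^sup>1 |g'| / n\<close>. By the product rule and the bounds
  \<open>|\<phi>\<^sub>j| \<le> \<surd>2\<close>, \<open>|\<phi>\<^sub>j'| \<le> \<surd>2 \<cdot> 2\<pi>\<lfloor>j/2\<rfloor>\<close>, together with
  \<open>\<integral>\<^sub>0\<^sup>1 |u| \<le> \<parallel>u\<parallel>\<^sub>2 \<le> \<surd>r\<close> for \<open>u = S, S'\<close>, this is at most
  \<open>\<surd>2 (1 + 2\<pi>\<lfloor>j/2\<rfloor>) \<surd>r / n \<le> 2\<pi> j \<surd>r / n\<close>.\<close>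

lemma right_endpoint_integral_error:
  fixes g g' :: "real \<Rightarrow> real"
  assumes "a \<le> b"
    and der: "\<And>x. x \<in> {a..b} \<Longrightarrow> (g has_real_derivative g' x) (at x within {a..b})"
    and cont': "continuous_on {a..b} g'"
  shows "\<bar>(b - a) * g b - integral {a..b} g\<bar> \<le> (b - a) * integral {a..b} (\<lambda>t. \<bar>g' t\<bar>)"
proof -
  define C where "C = integral {a..b} (\<lambda>t. \<bar>g' t\<bar>)"
  have int_g: "g integrable_on {a..b}"
    using DERIV_continuous_on[OF der] by (rule integrable_continuous_interval)
  have int_abs: "(\<lambda>t. \<bar>g' t\<bar>) integrable_on {c..d}" if "{c..d} \<subseteq> {a..b}" for c d
    using cont' that by (intro integrable_continuous_interval continuous_intros) (auto elim: continuous_on_subset)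
  have oscillation: "\<bar>g b - g t\<bar> \<le> C" if t: "t \<in> {a..b}" for t
  proof -
    have "(g' has_integral (g b - g t)) {t..b}"
      using t by (intro fundamental_theorem_of_calculus)
        (auto simp flip: has_real_derivative_iff_has_vector_derivative
              intro: has_field_derivative_subset[OF der])
    then have "\<bar>g b - g t\<bar> \<le> integral {t..b} (\<lambda>t. \<bar>g' t\<bar>)"
      using t integral_norm_bound_integral[of g' "{t..b}" "\<lambda>t. \<bar>g' t\<bar>"] int_abs[of t b]
      by (auto simp: integral_unique has_integral_integrable)
    also have "\<dots> \<le> C"
      unfolding C_def using t int_abs by (intro integral_subset_le) auto
    finally show ?thesis .
  qed
  have "C \<ge> 0"
    using oscillation[of b] \<open>a \<le> b\<close> by simp
  moreover have "((\<lambda>t. g b - g t) has_integral ((b - a) * g b - integral {a..b} g)) {a..b}"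
    using has_integral_diff[OF has_integral_const_real integrable_integral[OF int_g]] \<open>a \<le> b\<close>
    by simp
  ultimately have "norm ((b - a) * g b - integral {a..b} g) \<le> C * Henstock_Kurzweil_Integration.content {a..b}"
    by (rule has_integral_bound_real[OF _ finite.emptyI]) (use oscillation in auto)
  then show ?thesis
    using \<open>a \<le> b\<close> unfolding C_def by (simp add: mult.commute)
qed

lemma integral_sum_consecutive_intervals:
  fixes h :: "real \<Rightarrow> real" and x :: "nat \<Rightarrow> real"
  assumes "mono x" and "h integrable_on {x 0..x m}"
  shows "(\<Sum>l<m. integral {x l..x (Suc l)} h) = integral {x 0..x m} h"
  using assms(2)
proof (induction m)
  case (Suc m)
  have "x 0 \<le> x m" "x m \<le> x (Suc m)"
    using \<open>mono x\<close> by (auto simp: monoD)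
  moreover have "h integrable_on {x 0..x m}"
    using Suc.prems by (rule integrable_subinterval_real) (use calculation in auto)
  ultimately show ?case
    using Suc Henstock_Kurzweil_Integration.integral_combine by simp
qed simp

lemma right_Riemann_sum_error:
  fixes g g' :: "real \<Rightarrow> real" and n :: nat
  assumes "n > 0"
    and der: "\<And>x. x \<in> {0..1} \<Longrightarrow> (g has_real_derivative g' x) (at x within {0..1})"
    and cont': "continuous_on {0..1} g'"
  shows "\<bar>(1 / real n) * (\<Sum>l = 1..n. g (real l / real n)) - integral {0..1} g\<bar>
         \<le> (1 / real n) * integral {0..1} (\<lambda>t. \<bar>g' t\<bar>)"
proof -
  define x where "x l = real l / real n" for l
  have x_mono: "mono x"
    unfolding x_def by (intro monoI divide_right_mono) auto
  have x_ends: "x 0 = 0" "x n = 1"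
    using \<open>n > 0\<close> by (auto simp: x_def)
  have x_step: "x (Suc l) - x l = 1 / real n" for l
    using \<open>n > 0\<close> by (simp add: x_def field_simps)
  have sub: "{x l..x (Suc l)} \<subseteq> {0..1}" if "l < n" for l
    using that \<open>n > 0\<close> by (auto simp: x_def)
  have int_g: "g integrable_on {0..1}"
    using DERIV_continuous_on[OF der] by (rule integrable_continuous_interval)
  have int_abs: "(\<lambda>t. \<bar>g' t\<bar>) integrable_on {0..1}"
    using cont' by (intro integrable_continuous_interval continuous_intros)
  have local_error: "\<bar>(1 / real n) * g (x (Suc l)) - integral {x l..x (Suc l)} g\<bar>
      \<le> (1 / real n) * integral {x l..x (Suc l)} (\<lambda>t. \<bar>g' t\<bar>)" if "l < n" for l
  proof -
    have "x l \<le> x (Suc l)"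
      using x_mono by (simp add: monoD)
    moreover have "(g has_real_derivative g' y) (at y within {x l..x (Suc l)})"
      if "y \<in> {x l..x (Suc l)}" for y
      using sub[OF \<open>l < n\<close>] that by (blast intro: has_field_derivative_subset[OF der])
    ultimately have "\<bar>(x (Suc l) - x l) * g (x (Suc l)) - integral {x l..x (Suc l)} g\<bar>
        \<le> (x (Suc l) - x l) * integral {x l..x (Suc l)} (\<lambda>t. \<bar>g' t\<bar>)"
      by (rule right_endpoint_integral_error[OF _ _ continuous_on_subset[OF cont' sub[OF \<open>l < n\<close>]]])
    then show ?thesis
      by (simp only: x_step)
  qed
  have "\<bar>(1 / real n) * (\<Sum>l = 1..n. g (real l / real n)) - integral {0..1} g\<bar>
      = \<bar>\<Sum>l<n. (1 / real n) * g (x (Suc l)) - integral {x l..x (Suc l)} g\<bar>"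
    using integral_sum_consecutive_intervals[OF x_mono, of g n] int_g \<open>n > 0\<close>
    by (simp add: x_ends sum.atLeast1_atMost_eq sum_distrib_left sum_subtractf x_def)
  also have "\<dots> \<le> (\<Sum>l<n. (1 / real n) * integral {x l..x (Suc l)} (\<lambda>t. \<bar>g' t\<bar>))"
    using local_error by (intro order_trans[OF sum_abs] sum_mono) auto
  also have "\<dots> = (1 / real n) * integral {0..1} (\<lambda>t. \<bar>g' t\<bar>)"
    using integral_sum_consecutive_intervals[OF x_mono, of "\<lambda>t. \<bar>g' t\<bar>" n] int_abs
    by (simp add: x_ends flip: sum_divide_distrib)
  finally show ?thesis .
qed

lemma integral_abs_le_sqrt_integral_square:
  fixes f :: "real \<Rightarrow> real"
  assumes "continuous_on {0..1} f"
  shows "integral {0..1} (\<lambda>t. \<bar>f t\<bar>) \<le> sqrt (integral {0..1} (\<lambda>t. (f t)\<^sup>2))"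
proof -
  \<comment> \<open>\<open>0 \<le> \<integral>(|f| - c)\<^sup>2 = A - c\<^sup>2\<close>\<close>
  define c where "c = integral {0..1} (\<lambda>t. \<bar>f t\<bar>)"
  define A where "A = integral {0..1} (\<lambda>t. (f t)\<^sup>2)"
  have "((\<lambda>t. \<bar>f t\<bar>) has_integral c) {0..1}" "((\<lambda>t. (f t)\<^sup>2) has_integral A) {0..1}"
    unfolding c_def A_def using assms
    by (auto intro!: integrable_integral integrable_continuous_interval continuous_intros)
  then have "((\<lambda>t. (f t)\<^sup>2 - 2 * c * \<bar>f t\<bar> + c\<^sup>2) has_integral A - 2 * c * c + c\<^sup>2) {0..1}"
    using has_integral_const_real[of "c\<^sup>2" 0 1]
    by (intro has_integral_add has_integral_diff has_integral_mult_right) auto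
  moreover have "0 \<le> (f t)\<^sup>2 - 2 * c * \<bar>f t\<bar> + c\<^sup>2" for t
    using zero_le_power2[of "\<bar>f t\<bar> - c"] by (simp add: power2_eq_square algebra_simps)
  ultimately have "0 \<le> A - 2 * c * c + c\<^sup>2"
    by (rule has_integral_nonneg)
  moreover have "c \<ge> 0"
    unfolding c_def by (rule integral_nonneg) (use assms in \<open>auto intro!: integrable_continuous_interval continuous_intros\<close>)
  ultimately show ?thesis
    unfolding c_def[symmetric] A_def[symmetric] by (simp add: real_le_rsqrt power2_eq_square)
qed

lemma integral_abs_product_rule_le:
  fixes f f' h h' :: "real \<Rightarrow> real"
  assumes "continuous_on {a..b} f" "continuous_on {a..b} f'"
    and "continuous_on {a..b} h" "continuous_on {a..b} h'"
    and h_bound: "\<And>t. t \<in> {a..b} \<Longrightarrow> \<bar>h t\<bar> \<le> M"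
    and h'_bound: "\<And>t. t \<in> {a..b} \<Longrightarrow> \<bar>h' t\<bar> \<le> M'"
  shows "integral {a..b} (\<lambda>t. \<bar>f' t * h t + f t * h' t\<bar>)
         \<le> M * integral {a..b} (\<lambda>t. \<bar>f' t\<bar>) + M' * integral {a..b} (\<lambda>t. \<bar>f t\<bar>)"
proof -
  have int: "(\<lambda>t. \<bar>u t\<bar>) integrable_on {a..b}" if "continuous_on {a..b} u" for u :: "real \<Rightarrow> real"
    using that by (intro integrable_continuous_interval continuous_intros)
  have "integral {a..b} (\<lambda>t. \<bar>f' t * h t + f t * h' t\<bar>)
      \<le> integral {a..b} (\<lambda>t. M * \<bar>f' t\<bar> + M' * \<bar>f t\<bar>)"
  proof (rule integral_le)
    fix t assume t: "t \<in> {a..b}"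
    have "\<bar>f' t * h t + f t * h' t\<bar> \<le> \<bar>f' t\<bar> * \<bar>h t\<bar> + \<bar>f t\<bar> * \<bar>h' t\<bar>"
      by (metis abs_mult abs_triangle_ineq)
    also have "\<dots> \<le> \<bar>f' t\<bar> * M + \<bar>f t\<bar> * M'"
      using t by (intro add_mono mult_left_mono h_bound h'_bound) auto
    finally show "\<bar>f' t * h t + f t * h' t\<bar> \<le> M * \<bar>f' t\<bar> + M' * \<bar>f t\<bar>"
      by (simp add: mult.commute)
  qed (use assms int in \<open>auto intro!: integrable_add integrable_cmul integrable_continuous_interval continuous_intros\<close>)
  also have "\<dots> = M * integral {a..b} (\<lambda>t. \<bar>f' t\<bar>) + M' * integral {a..b} (\<lambda>t. \<bar>f t\<bar>)"
    using integrable_on_cmult_left[OF int[OF assms(2)], of M]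
      integrable_on_cmult_left[OF int[OF assms(1)], of M']
    by (simp add: integral_add)
  finally show ?thesis .
qed

definition phi' :: "nat \<Rightarrow> real \<Rightarrow> real" where
  "phi' j x = (if j = 1 then 0
              else sqrt 2 * (if even j then - (2 * pi * real (j div 2)) * sin (2 * pi * real (j div 2) * x)
                                       else (2 * pi * real (j div 2)) * cos (2 * pi * real (j div 2) * x)))"

lemma phi_has_real_derivative: "(phi j has_real_derivative phi' j x) (at x)"
  unfolding phi_def phi'_def
  by (cases "j = 1"; cases "even j") (auto intro!: derivative_eq_intros)

lemma continuous_on_phi: "continuous_on A (phi j)"
  unfolding phi_def by (cases "j = 1"; cases "even j") (auto intro!: continuous_intros)

lemma continuous_on_phi': "continuous_on A (phi' j)"
  unfolding phi'_def by (cases "j = 1"; cases "even j") (auto intro!: continuous_intros)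

lemma abs_phi_le: "\<bar>phi j x\<bar> \<le> sqrt 2"
  unfolding phi_def by (auto simp: abs_mult)

lemma abs_phi'_le: "\<bar>phi' j x\<bar> \<le> sqrt 2 * (2 * pi * real (j div 2))"
  unfolding phi'_def by (auto simp: abs_mult intro!: mult_left_le)

lemma W1_has_real_derivative:
  assumes "S \<in> W1 r"
  shows "(S has_real_derivative deriv S x) (at x)"
  using assms unfolding W1_def by (auto simp: DERIV_deriv_iff_real_differentiable)

lemma W1_continuous_on:
  assumes S: "S \<in> W1 r"
  shows "continuous_on A S" and "continuous_on A (deriv S)"
proof -
  have "continuous_on UNIV S"
    using W1_has_real_derivative[OF S] by (rule DERIV_continuous_on)
  then show "continuous_on A S" and "continuous_on A (deriv S)"
    using S unfolding W1_def by (auto elim: continuous_on_subset)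
qed

lemma W1_integral_abs_le:
  assumes S: "S \<in> W1 r"
  shows "integral {0..1} (\<lambda>t. \<bar>S t\<bar>) \<le> sqrt r"
    and "integral {0..1} (\<lambda>t. \<bar>deriv S t\<bar>) \<le> sqrt r"
proof -
  note cont = W1_continuous_on[OF S, of "{0..1}"]
  have nonneg: "0 \<le> integral {0..1} (\<lambda>t. (u t)\<^sup>2)" if "continuous_on {0..1} u" for u :: "real \<Rightarrow> real"
    using that by (intro integral_nonneg integrable_continuous_interval continuous_intros) auto
  have "integral {0..1} (\<lambda>t. (S t)\<^sup>2) + integral {0..1} (\<lambda>t. (deriv S t)\<^sup>2) \<le> r"
    using S unfolding W1_def by blast
  then have "integral {0..1} (\<lambda>t. (S t)\<^sup>2) \<le> r" "integral {0..1} (\<lambda>t. (deriv S t)\<^sup>2) \<le> r"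
    using nonneg[OF cont(1)] nonneg[OF cont(2)] by linarith+
  then show "integral {0..1} (\<lambda>t. \<bar>S t\<bar>) \<le> sqrt r"
    and "integral {0..1} (\<lambda>t. \<bar>deriv S t\<bar>) \<le> sqrt r"
    using integral_abs_le_sqrt_integral_square[OF cont(1)] integral_abs_le_sqrt_integral_square[OF cont(2)]
    by (auto intro: order_trans real_sqrt_le_mono)
qed

lemma sqrt2_frequency_le:
  fixes j :: nat
  assumes "1 \<le> j"
  shows "sqrt 2 * (1 + 2 * pi * real (j div 2)) \<le> 2 * pi * real j"
proof -
  have "sqrt 2 \<le> 3 / 2"
    by (rule real_le_lsqrt) (auto simp: power2_eq_square)
  moreover have "2 * pi * real (j div 2) \<le> pi * real j"
  proof -
    have "2 * real (j div 2) \<le> real j"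
      by linarith
    then show ?thesis
      using mult_left_mono[of "2 * real (j div 2)" "real j" pi] by (simp add: mult_ac)
  qed
  moreover have "pi * real j \<ge> 3"
    using assms pi_gt3 mult_mono[of 3 pi 1 "real j"] by simp
  ultimately have "sqrt 2 * (1 + 2 * pi * real (j div 2)) \<le> 3 / 2 * (1 + pi * real j)"
    by (intro mult_mono) auto
  also have "\<dots> \<le> 2 * pi * real j"
    using \<open>pi * real j \<ge> 3\<close> by simp
  finally show ?thesis .
qed

theorem lemmaA3:
  fixes n j :: nat and r :: real
  assumes "n \<ge> 2" and "1 \<le> j" and "j \<le> n" and "r > 0"
  shows "\<forall>S \<in> W1 r. \<bar>theta_n S j n - theta S j\<bar> \<le> 2 * pi * sqrt r * real j / real n"
proof
  fix S assume S: "S \<in> W1 r"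
  define k where "k = 2 * pi * real (j div 2)"
  note cont = W1_continuous_on[OF S, of "{0..1}"]
  have der: "((\<lambda>t. S t * phi j t) has_real_derivative deriv S x * phi j x + S x * phi' j x) (at x)" for x
    using DERIV_mult[OF W1_has_real_derivative[OF S] phi_has_real_derivative] by (simp add: mult.commute)
  have "\<bar>theta_n S j n - theta S j\<bar>
      \<le> (1 / real n) * integral {0..1} (\<lambda>t. \<bar>deriv S t * phi j t + S t * phi' j t\<bar>)"
    unfolding theta_n_def theta_def using \<open>n \<ge> 2\<close> cont continuous_on_phi continuous_on_phi'
    by (intro right_Riemann_sum_error has_field_derivative_at_within[OF der] continuous_intros) auto
  also have "\<dots> \<le> (1 / real n) * (sqrt 2 * integral {0..1} (\<lambda>t. \<bar>deriv S t\<bar>)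
                                  + sqrt 2 * k * integral {0..1} (\<lambda>t. \<bar>S t\<bar>))"
    using cont continuous_on_phi continuous_on_phi' abs_phi_le abs_phi'_le
    unfolding k_def by (intro mult_left_mono integral_abs_product_rule_le) auto
  also have "\<dots> \<le> (1 / real n) * (sqrt 2 * (1 + k) * sqrt r)"
    using W1_integral_abs_le[OF S] unfolding k_def
    by (intro mult_left_mono) (auto simp: distrib_left distrib_right intro!: add_mono mult_left_mono)
  also have "\<dots> \<le> (1 / real n) * (2 * pi * real j * sqrt r)"
    using sqrt2_frequency_le[OF \<open>1 \<le> j\<close>] \<open>r > 0\<close> unfolding k_def
    by (intro mult_left_mono mult_right_mono) auto
  finally show "\<bar>theta_n S j n - theta S j\<bar> \<le> 2 * pi * sqrt r * real j / real n"
    by (simp add: field_simps)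
qed

end
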